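(* For each point $p$ of $\mathcal{W}(3,2)$, consider the type-$p$ $X$-states, i.e. the two-qubit density matrices $\rho=\tfrac14\big(I\otimes I+\sum_{q\in H_p}c_q\,q\big)$ with real coefficients $c_q$. The $9$ types $p$ of Group 2 (those for which some valid type-$p$ state is entangled) are exactly the $9$ points $p$ whose perp-set $H_p$ intersects $\mathcal{Q}_0$ tangentially. The $6$ types of Group 1 (those for which every valid type-$p$ state is separable) are exactly the $6$ points $p$ whose perp-set $H_p$ intersects $\mathcal{Q}_0$ transversally.
   Context: The symplectic polar space $\mathcal{W}(3,2)$ is realized as follows. Its $15$ points are the $15$ nontrivial two-qubit Pauli operators $A\otimes B$ with $A,B\in\{I,X,Y,Z\}$, not both $I$, taken up to phase. Its $15$ lines are the triples $\{P,Q,PQ\}$ (up to phase) of pairwise commuting such operators. For a point $p$, its perp-set is $H_p=\{q: q \text{ commutes with } p\}$. It contains $p$ and has $7$ points: the union of the three lines through $p$. $\mathcal{Q}_0$ is the set of the $9$ points $A\otimes B$ with $A,B\in\{X,Y,Z\}$. Together with the $6$ lines of $\mathcal{W}(3,2)$ contained in it, $\mathcal{Q}_0$ forms a $3\times3$ grid; it is the hyperbolic quadric $x_1x_2+x_3x_4+x_1+x_2+x_3+x_4=0$ in the coordinates where $(Z^{\mu_1}X^{\nu_1})\otimes(Z^{\mu_2}X^{\nu_2})\mapsto[\mu_1:\nu_1:\mu_2:\nu_2]$. A geometric hyperplane of a point-line geometry is a set of points such that every line either lies in it or meets it in exactly one point. The geometric hyperplanes of the grid $\mathcal{Q}_0$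 are of two kinds: - perp-sets of the grid: a point together with the two grid lines through it ($5$ points); - ovoids: $3$ points, no two on a common grid line. $H_p$ intersects $\mathcal{Q}_0$ tangentially if $H_p\cap\mathcal{Q}_0$ is a perp-set of the grid, and transversally if $H_p\cap\mathcal{Q}_0$ is an ovoid of the grid. A density matrix is valid if positive semidefinite, and separable/entangled according to whether its partial transpose is positive semidefinite or not. *)

theory Defs
  imports Complex_Main
begin

text \<open>Single-qubit Pauli matrices, labelled 0 = I, 1 = X, 2 = Y, 3 = Z,
  as functions on indices 0,1 (value 0 outside).\<close>
definition pauli1 :: "nat \<Rightarrow> nat \<Rightarrow> nat \<Rightarrow> complex" where
  "pauli1 a i j =
     (if i < 2 \<and> j < 2 then
        (if a = 0 then (if i = j then 1 else 0)
         else if a = 1 then (if i = j then 0 else 1)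
         else if a = 2 then (if i = j then 0 else if i = 0 then - \<i> else \<i>)
         else if a = 3 then (if i = j then (if i = 0 then 1 else -1) else 0)
         else 0)
      else 0)"

type_synonym pt = "nat \<times> nat"

text \<open>4x4 matrices as functions on indices 0..3; the tensor product A \<otimes> B
  has entry (2i+k, 2j+l) equal to A i j * B k l.\<close>
definition pmat :: "pt \<Rightarrow> nat \<Rightarrow> nat \<Rightarrow> complex" where
  "pmat p r s = (if r < 4 \<and> s < 4 then
      pauli1 (fst p) (r div 2) (s div 2) * pauli1 (snd p) (r mod 2) (s mod 2) else 0)"

definition mult4 :: "(nat \<Rightarrow> nat \<Rightarrow> complex) \<Rightarrow> (nat \<Rightarrow> nat \<Rightarrow> complex) \<Rightarrow> nat \<Rightarrow> nat \<Rightarrow> complex" where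
  "mult4 A B i j = (\<Sum>k<4. A i k * B k j)"

text \<open>The 15 points of W(3,2): nontrivial two-qubit Pauli operators (up to phase).\<close>
definition points :: "pt set" where
  "points = {(a, b). a < 4 \<and> b < 4 \<and> (a, b) \<noteq> (0, 0)}"

definition commutes :: "pt \<Rightarrow> pt \<Rightarrow> bool" where
  "commutes p q \<longleftrightarrow> (\<forall>i<4. \<forall>j<4. mult4 (pmat p) (pmat q) i j = mult4 (pmat q) (pmat p) i j)"

definition prop_prod :: "pt \<Rightarrow> pt \<Rightarrow> pt \<Rightarrow> bool" where
  "prop_prod R P Q \<longleftrightarrow> (\<exists>c::complex. \<forall>i<4. \<forall>j<4. pmat R i j = c * mult4 (pmat P) (pmat Q) i j)"

definition is_line :: "pt set \<Rightarrow> bool" where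
  "is_line L \<longleftrightarrow> (\<exists>P Q R. L = {P, Q, R} \<and> P \<in> points \<and> Q \<in> points \<and> R \<in> points \<and>
      P \<noteq> Q \<and> P \<noteq> R \<and> Q \<noteq> R \<and>
      commutes P Q \<and> commutes P R \<and> commutes Q R \<and> prop_prod R P Q)"

definition perp :: "pt \<Rightarrow> pt set" where
  "perp p = {q \<in> points. commutes p q}"

definition Q0 :: "pt set" where
  "Q0 = {(a, b). a \<in> {1, 2, 3} \<and> b \<in> {1, 2, 3}}"

definition grid_line :: "pt set \<Rightarrow> bool" where
  "grid_line L \<longleftrightarrow> is_line L \<and> L \<subseteq> Q0"

definition grid_perp :: "pt \<Rightarrow> pt set" where
  "grid_perp x = insert x (\<Union>{L. grid_line L \<and> x \<in> L})"

definition grid_ovoid :: "pt set \<Rightarrow> bool" where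
  "grid_ovoid S \<longleftrightarrow> S \<subseteq> Q0 \<and> card S = 3 \<and>
     (\<forall>x\<in>S. \<forall>y\<in>S. x \<noteq> y \<longrightarrow> \<not> (\<exists>L. grid_line L \<and> x \<in> L \<and> y \<in> L))"

definition tangential :: "pt \<Rightarrow> bool" where
  "tangential p \<longleftrightarrow> (\<exists>x\<in>Q0. perp p \<inter> Q0 = grid_perp x)"

definition transversal :: "pt \<Rightarrow> bool" where
  "transversal p \<longleftrightarrow> grid_ovoid (perp p \<inter> Q0)"

definition xstate :: "pt \<Rightarrow> (pt \<Rightarrow> real) \<Rightarrow> nat \<Rightarrow> nat \<Rightarrow> complex" where
  "xstate p c i j = (1/4) * (pmat (0, 0) i j + (\<Sum>q\<in>perp p. complex_of_real (c q) * pmat q i j))"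

definition psd4 :: "(nat \<Rightarrow> nat \<Rightarrow> complex) \<Rightarrow> bool" where
  "psd4 M \<longleftrightarrow> (\<forall>v :: nat \<Rightarrow> complex.
      (\<Sum>i<4. \<Sum>j<4. cnj (v i) * M i j * v j) \<in> \<real> \<and>
      0 \<le> Re (\<Sum>i<4. \<Sum>j<4. cnj (v i) * M i j * v j))"

text \<open>Partial transpose with respect to the second qubit.\<close>
definition ptrans :: "(nat \<Rightarrow> nat \<Rightarrow> complex) \<Rightarrow> nat \<Rightarrow> nat \<Rightarrow> complex" where
  "ptrans M r s = M (2 * (r div 2) + s mod 2) (2 * (s div 2) + r mod 2)"

definition valid :: "(nat \<Rightarrow> nat \<Rightarrow> complex) \<Rightarrow> bool" where
  "valid M \<longleftrightarrow> psd4 M"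

definition separable :: "(nat \<Rightarrow> nat \<Rightarrow> complex) \<Rightarrow> bool" where
  "separable M \<longleftrightarrow> psd4 (ptrans M)"

definition entangled :: "(nat \<Rightarrow> nat \<Rightarrow> complex) \<Rightarrow> bool" where
  "entangled M \<longleftrightarrow> \<not> psd4 (ptrans M)"

end

(*
  Label I, X, Y, Z by 0, 1, 2, 3. Up to a phase, Pauli matrices multiply by XOR of labels, and
  two points of W(3,2) commute iff an even number of their tensor factors anticommute.

  Geometry: if x is on the grid Q0 and y \<noteq> x is in H_x \<inter> Q0, then {x, y, xy} is a grid line,
  so H_x \<inter> Q0 is the grid perp-set of x (5 points). The six off-grid points are I \<otimes> B and
  A \<otimes> I, and H_p \<inter> Q0 is then a column or a row of the grid: three pairwise non-commuting
  points, an ovoid.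

  States: every grid point lies on one of three disjoint grid lines, and each of these lines
  supports a Bell state, which is valid with a partial transpose that is not positive. For an
  off-grid point, partial transposition only negates the Y in the second factor; on H_p this
  amounts to a permutation of the basis, possibly combined with full transposition, and both
  preserve positivity.
*)

theory Submission
  imports Defs
begin

lemma less_4_cases: "(i::nat) < 4 \<longleftrightarrow> i = 0 \<or> i = 1 \<or> i = 2 \<or> i = 3"
  by auto

lemma less_2_cases: "(i::nat) < 2 \<longleftrightarrow> i = 0 \<or> i = 1"
  by auto

lemma ex_less_4: "(\<exists>i<4::nat. P i) \<longleftrightarrow> P 0 \<or> P 1 \<or> P 2 \<or> P 3"
  unfolding less_4_cases by blast

lemma sum_lessThan_4: "(\<Sum>k<4::nat. f k) = f 0 + f 1 + f 2 + f 3"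
  by (simp add: numeral_eq_Suc add.commute add.left_commute)

lemma sum_lessThan_2: "(\<Sum>k<2::nat. f k) = f 0 + f 1"
  by (simp add: numeral_eq_Suc add.commute)

definition pauli_anticommute :: "nat \<Rightarrow> nat \<Rightarrow> bool" where
  "pauli_anticommute a c \<longleftrightarrow> a \<noteq> 0 \<and> c \<noteq> 0 \<and> a \<noteq> c"

lemma xor_less_4: "a < 4 \<Longrightarrow> c < 4 \<Longrightarrow> xor a c < (4::nat)"
  unfolding less_4_cases by (elim disjE) simp_all

lemma xor_eq_0_iff: "xor (a::nat) c = 0 \<longleftrightarrow> a = c"
  by (metis xor.assoc xor.right_neutral xor_self_eq)

lemma xor_eq_left_iff: "xor (a::nat) c = a \<longleftrightarrow> c = 0"
  by (metis xor.assoc xor.right_neutral xor_self_eq xor.left_neutral)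

lemma xor_eq_right_iff: "xor (a::nat) c = c \<longleftrightarrow> a = 0"
  using xor_eq_left_iff[of c a] by (simp add: xor.commute)

lemma xor_distinct_nonzero_labels:
  "a \<in> {1, 2, 3} \<Longrightarrow> c \<in> {1, 2, 3} \<Longrightarrow> a \<noteq> c \<Longrightarrow> xor a c \<in> {1, 2, (3::nat)}"
  by auto

lemma bij_betw_xor_less_4:
  assumes "k < 4"
  shows "bij_betw (\<lambda>i. xor i k) {..<4} {..<(4::nat)}"
  by (rule bij_betw_byWitness[where f' = "\<lambda>i. xor i k"])
     (use assms in \<open>auto simp: xor.assoc xor_less_4\<close>)

lemma pauli_anticommute_commute: "pauli_anticommute a c \<longleftrightarrow> pauli_anticommute c a"
  by (auto simp: pauli_anticommute_def)

lemma pauli_anticommute_xor: "pauli_anticommute a (xor a c) \<longleftrightarrow> pauli_anticommute a c"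
  using xor_eq_0_iff[of a c] xor_eq_left_iff[of a c] by (auto simp: pauli_anticommute_def)

definition pauli1_mult :: "nat \<Rightarrow> nat \<Rightarrow> nat \<Rightarrow> nat \<Rightarrow> complex" where
  "pauli1_mult a c i j = (\<Sum>k<2. pauli1 a i k * pauli1 c k j)"

text \<open>For anticommuting labels the phase is \<open>\<i>\<close> exactly for the cyclic pairs (X,Y), (Y,Z), (Z,X),
  which is what \<open>(c + 3 - a) mod 3 = 1\<close> tests, and \<open>-\<i>\<close> otherwise.\<close>

definition pauli_phase :: "nat \<Rightarrow> nat \<Rightarrow> complex" where
  "pauli_phase a c =
     (if \<not> pauli_anticommute a c then 1 else if (c + 3 - a) mod 3 = 1 then \<i> else - \<i>)"

lemma pauli1_mult_eq:
  assumes "a < 4" "c < 4" "i < 2" "j < 2"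
  shows "pauli1_mult a c i j = pauli_phase a c * pauli1 (xor a c) i j"
  using assms unfolding less_4_cases less_2_cases
  by (elim disjE) (simp_all add: pauli1_mult_def sum_lessThan_2 pauli1_def pauli_phase_def pauli_anticommute_def)

lemma pauli_phase_swap:
  assumes "a < 4" "c < 4"
  shows "pauli_phase c a = (if pauli_anticommute a c then -1 else 1) * pauli_phase a c"
  using assms unfolding less_4_cases
  by (elim disjE) (simp_all add: pauli_phase_def pauli_anticommute_def)

lemma pauli_phase_nonzero: "pauli_phase a c \<noteq> 0"
  by (simp add: pauli_phase_def)

definition pt_mult :: "pt \<Rightarrow> pt \<Rightarrow> pt" where
  "pt_mult P Q = (xor (fst P) (fst Q), xor (snd P) (snd Q))"

lemma pt_mult_commute: "pt_mult P Q = pt_mult Q P"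
  by (simp add: pt_mult_def xor.commute)

definition pt_phase :: "pt \<Rightarrow> pt \<Rightarrow> complex" where
  "pt_phase P Q = pauli_phase (fst P) (fst Q) * pauli_phase (snd P) (snd Q)"

lemma mult4_pmat:
  assumes "a < 4" "b < 4" "c < 4" "d < 4" "i < 4" "j < 4"
  shows "mult4 (pmat (a, b)) (pmat (c, d)) i j = pt_phase (a, b) (c, d) * pmat (pt_mult (a, b) (c, d)) i j"
proof -
  have "mult4 (pmat (a, b)) (pmat (c, d)) i j
      = pauli1_mult a c (i div 2) (j div 2) * pauli1_mult b d (i mod 2) (j mod 2)"
    using assms(5,6) unfolding less_4_cases
    by (elim disjE) (simp_all add: mult4_def sum_lessThan_4 sum_lessThan_2 pauli1_mult_def pmat_def algebra_simps)
  then show ?thesis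
    using assms by (simp add: pauli1_mult_eq pt_phase_def pt_mult_def pmat_def)
qed

lemma pt_phase_nonzero: "pt_phase P Q \<noteq> 0"
  by (simp add: pt_phase_def pauli_phase_nonzero)

lemma pmat_nonzero:
  assumes "a < 4" "b < 4"
  shows "\<exists>j<4. pmat (a, b) 0 j \<noteq> 0"
  unfolding ex_less_4 using assms unfolding less_4_cases
  by (elim disjE) (simp_all add: pmat_def pauli1_def)

lemma commutes_iff:
  assumes "a < 4" "b < 4" "c < 4" "d < 4"
  shows "commutes (a, b) (c, d) \<longleftrightarrow> (pauli_anticommute a c \<longleftrightarrow> pauli_anticommute b d)"
proof -
  let ?R = "pmat (pt_mult (a, b) (c, d))" and ?\<phi> = "pt_phase (a, b) (c, d)"
  have phase_swap: "pt_phase (c, d) (a, b) =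
      (if pauli_anticommute a c \<longleftrightarrow> pauli_anticommute b d then 1 else -1) * ?\<phi>"
    using pauli_phase_swap[OF assms(1,3)] pauli_phase_swap[OF assms(2,4)]
    by (simp add: pt_phase_def)
  have commutes_eq: "commutes (a, b) (c, d) \<longleftrightarrow>
      (\<forall>i<4. \<forall>j<4. ?\<phi> * ?R i j = pt_phase (c, d) (a, b) * ?R i j)"
    unfolding commutes_def using assms by (simp add: mult4_pmat pt_mult_commute[of "(c, d)"])
  \<comment> \<open>both products are multiples of the Pauli matrix ?R, so they agree iff the phases do\<close>
  obtain j where "j < 4" "?R 0 j \<noteq> 0"
    using pmat_nonzero[of "xor a c" "xor b d"] assms by (auto simp: pt_mult_def xor_less_4)
  moreover note pt_phase_nonzero[of "(a, b)" "(c, d)"]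
  ultimately show ?thesis
    unfolding commutes_eq phase_swap by auto (use zero_less_numeral in blast)
qed

lemma commutes_refl: "commutes P P"
  by (simp add: commutes_def)

lemma commutes_sym: "commutes P Q \<Longrightarrow> commutes Q P"
  by (simp add: commutes_def)

lemma perp_eq:
  assumes "a < 4" "b < 4"
  shows "perp (a, b) = {(c, d). c < 4 \<and> d < 4 \<and> (c, d) \<noteq> (0, 0) \<and>
                          (pauli_anticommute a c \<longleftrightarrow> pauli_anticommute b d)}"
  using assms by (auto simp: perp_def points_def commutes_iff)

lemma is_line_pt_mult:
  assumes P: "P \<in> points" and Q: "Q \<in> points" and "P \<noteq> Q" "commutes P Q"
  shows "is_line {P, Q, pt_mult P Q}"
proof -
  obtain a b c d where PQ: "P = (a, b)" "Q = (c, d)"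
    and labels: "a < 4" "b < 4" "c < 4" "d < 4"
    and nontrivial: "(a, b) \<noteq> (0, 0)" "(c, d) \<noteq> (0, 0)"
    using P Q by (auto simp: points_def)
  have distinct: "(a, b) \<noteq> (c, d)" and comm: "pauli_anticommute a c \<longleftrightarrow> pauli_anticommute b d"
    using \<open>P \<noteq> Q\<close> \<open>commutes P Q\<close> by (simp_all add: PQ commutes_iff labels)
  let ?R = "pt_mult P Q"
  have R: "?R = (xor a c, xor b d)"
    by (simp add: PQ pt_mult_def)
  have "?R \<in> points"
    using labels distinct by (auto simp: R points_def xor_less_4 xor_eq_0_iff simp flip: neq0_conv)
  moreover have "?R \<noteq> P" "?R \<noteq> Q"
    using nontrivial by (auto simp: PQ pt_mult_def xor_eq_left_iff xor_eq_right_iff)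
  moreover have "commutes P ?R" "commutes Q ?R"
    using comm labels pauli_anticommute_xor[of c a] pauli_anticommute_xor[of d b]
    by (simp_all add: PQ pt_mult_def commutes_iff xor_less_4 pauli_anticommute_xor xor.commute
        pauli_anticommute_commute[of c a] pauli_anticommute_commute[of d b])
  moreover have "prop_prod ?R P Q"
    unfolding prop_prod_def
  proof (intro exI allI impI)
    fix i j :: nat
    assume "i < 4" "j < 4"
    then show "pmat ?R i j = inverse (pt_phase P Q) * mult4 (pmat P) (pmat Q) i j"
      using labels pt_phase_nonzero[of P Q] by (simp add: PQ mult4_pmat)
  qed
  ultimately show ?thesis
    unfolding is_line_def using P Q \<open>P \<noteq> Q\<close> \<open>commutes P Q\<close>
    by (intro exI[of _ P] exI[of _ Q] exI[of _ ?R]) simp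
qed

lemma is_line_commutes: "is_line L \<Longrightarrow> x \<in> L \<Longrightarrow> y \<in> L \<Longrightarrow> commutes x y"
  unfolding is_line_def using commutes_refl commutes_sym by blast

lemma points_eq: "points = {..<4} \<times> {..<4} - {(0, 0)}"
  by (auto simp: points_def)

lemma Q0_eq: "Q0 = {1, 2, 3} \<times> {1, 2, 3}"
  by (auto simp: Q0_def)

lemma finite_points: "finite points"
  by (simp add: points_eq)

lemma card_points: "card points = 15"
  by (simp add: points_eq card_cartesian_product)

lemma Q0_subset_points: "Q0 \<subseteq> points"
  by (auto simp: Q0_def points_def)

lemma perp_inter_Q0_grid_point:
  assumes "(a, b) \<in> Q0"
  shows "perp (a, b) \<inter> Q0 = insert (a, b) (({1, 2, 3} - {a}) \<times> ({1, 2, 3} - {b}))"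
  using assms by (auto simp: Q0_def perp_eq pauli_anticommute_def)

lemma card_perp_inter_Q0_grid_point:
  assumes "x \<in> Q0"
  shows "card (perp x \<inter> Q0) = 5"
proof -
  obtain a b where ab: "x = (a, b)" "a \<in> {1, 2, 3}" "b \<in> {1, 2, 3}"
    using assms by (auto simp: Q0_def)
  have "perp x \<inter> Q0 = insert (a, b) (({1, 2, 3} - {a}) \<times> ({1, 2, 3} - {b}))"
    using assms by (simp add: ab perp_inter_Q0_grid_point)
  also have "card \<dots> = 5"
    using ab(2,3) by auto
  finally show ?thesis .
qed

lemma grid_perp_eq:
  assumes x: "x \<in> Q0"
  shows "grid_perp x = perp x \<inter> Q0"
proof
  show "grid_perp x \<subseteq> perp x \<inter> Q0"
  proof
    fix y
    assume "y \<in> grid_perp x"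
    then have "y \<in> Q0 \<and> commutes x y"
      unfolding grid_perp_def grid_line_def using x is_line_commutes commutes_refl by blast
    then show "y \<in> perp x \<inter> Q0"
      using Q0_subset_points by (auto simp: perp_def)
  qed
next
  show "perp x \<inter> Q0 \<subseteq> grid_perp x"
  proof
    fix y
    assume y: "y \<in> perp x \<inter> Q0"
    show "y \<in> grid_perp x"
    proof (cases "y = x")
      case False
      obtain a b c d where xy: "x = (a, b)" "y = (c, d)"
        by fastforce
      have "a \<in> {1, 2, 3}" "b \<in> {1, 2, 3}"
        using x by (auto simp: xy Q0_def)
      moreover have "c \<in> {1, 2, 3} - {a}" "d \<in> {1, 2, 3} - {b}"
        using x y False by (auto simp: xy perp_inter_Q0_grid_point)
      ultimately have "pt_mult x y \<in> Q0"
        using xor_distinct_nonzero_labels[of a c] xor_distinct_nonzero_labels[of b d] by (simp add: xy pt_mult_def Q0_def)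
      moreover have "is_line {x, y, pt_mult x y}"
        using y False x Q0_subset_points by (intro is_line_pt_mult) (auto simp: perp_def)
      ultimately have "grid_line {x, y, pt_mult x y}"
        using x y by (simp add: grid_line_def)
      then show ?thesis
        by (auto simp: grid_perp_def)
    qed (simp add: grid_perp_def)
  qed
qed

lemma off_grid_cases:
  assumes "p \<in> points" "p \<notin> Q0"
  obtains (I_tensor) b where "b \<in> {1, 2, 3}" "p = (0, b)"
    | (tensor_I) a where "a \<in> {1, 2, 3}" "p = (a, 0)"
  using assms unfolding points_def Q0_def by (cases p) (auto simp: less_4_cases)

lemma perp_inter_Q0_I_tensor: "b \<in> {1, 2, 3} \<Longrightarrow> perp (0, b) \<inter> Q0 = {1, 2, 3} \<times> {b}"
  by (auto simp: Q0_def perp_eq pauli_anticommute_def)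

lemma perp_inter_Q0_tensor_I: "a \<in> {1, 2, 3} \<Longrightarrow> perp (a, 0) \<inter> Q0 = {a} \<times> {1, 2, 3}"
  by (auto simp: Q0_def perp_eq pauli_anticommute_def)

lemma card_perp_inter_Q0_off_grid:
  assumes "p \<in> points" "p \<notin> Q0"
  shows "card (perp p \<inter> Q0) = 3"
  using assms
  by (cases rule: off_grid_cases) (auto simp: perp_inter_Q0_I_tensor perp_inter_Q0_tensor_I)

lemma off_grid_perp_inter_Q0_noncommuting:
  assumes "p \<in> points" "p \<notin> Q0" "x \<in> perp p \<inter> Q0" "y \<in> perp p \<inter> Q0" "x \<noteq> y"
  shows "\<not> commutes x y"
  using assms(1,2)
proof (cases rule: off_grid_cases)
  case (I_tensor b)
  then obtain a a' where "x = (a, b)" "y = (a', b)" "a \<in> {1, 2, 3}" "a' \<in> {1, 2, 3}"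
    using assms(3,4) by (auto simp: perp_inter_Q0_I_tensor)
  then show ?thesis
    using I_tensor \<open>x \<noteq> y\<close> by (auto simp: commutes_iff pauli_anticommute_def)
next
  case (tensor_I a)
  then obtain b b' where "x = (a, b)" "y = (a, b')" "b \<in> {1, 2, 3}" "b' \<in> {1, 2, 3}"
    using assms(3,4) by (auto simp: perp_inter_Q0_tensor_I)
  then show ?thesis
    using tensor_I \<open>x \<noteq> y\<close> by (auto simp: commutes_iff pauli_anticommute_def)
qed

lemma tangential_iff:
  assumes "p \<in> points"
  shows "tangential p \<longleftrightarrow> p \<in> Q0"
proof
  assume "tangential p"
  then obtain x where "x \<in> Q0" "perp p \<inter> Q0 = perp x \<inter> Q0"
    by (auto simp: tangential_def grid_perp_eq)
  then show "p \<in> Q0"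
    using assms card_perp_inter_Q0_grid_point card_perp_inter_Q0_off_grid by fastforce
next
  assume "p \<in> Q0"
  then show "tangential p"
    by (auto simp: tangential_def grid_perp_eq)
qed

lemma transversal_iff:
  assumes "p \<in> points"
  shows "transversal p \<longleftrightarrow> p \<notin> Q0"
proof
  assume "transversal p"
  then have "card (perp p \<inter> Q0) = 3"
    by (simp add: transversal_def grid_ovoid_def)
  then show "p \<notin> Q0"
    using card_perp_inter_Q0_grid_point[of p] by auto
next
  assume off: "p \<notin> Q0"
  have "\<not> (\<exists>L. grid_line L \<and> x \<in> L \<and> y \<in> L)"
    if "x \<in> perp p \<inter> Q0" "y \<in> perp p \<inter> Q0" "x \<noteq> y" for x y
    using off_grid_perp_inter_Q0_noncommuting[OF assms off that] is_line_commutes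
    unfolding grid_line_def by blast
  then show "transversal p"
    unfolding transversal_def grid_ovoid_def
    using card_perp_inter_Q0_off_grid[OF assms off] by blast
qed

lemma psd4_cong:
  assumes "\<And>i j. i < 4 \<Longrightarrow> j < 4 \<Longrightarrow> N i j = M i j" "psd4 M"
  shows "psd4 N"
proof -
  have "(\<Sum>i<4. \<Sum>j<4. cnj (v i) * N i j * v j) = (\<Sum>i<4. \<Sum>j<4. cnj (v i) * M i j * v j)" for v
    using assms(1) by (intro sum.cong) simp_all
  then show ?thesis
    using assms(2) by (simp add: psd4_def)
qed

lemma psd4_reindex:
  assumes \<sigma>: "bij_betw \<sigma> {..<4} {..<4}" and M: "psd4 M"
  shows "psd4 (\<lambda>i j. M (\<sigma> i) (\<sigma> j))"
  unfolding psd4_def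
proof
  fix v :: "nat \<Rightarrow> complex"
  define u where "u = v \<circ> inv_into {..<4} \<sigma>"
  have "(\<Sum>i<4. \<Sum>j<4. cnj (v i) * M (\<sigma> i) (\<sigma> j) * v j) =
        (\<Sum>i<4. \<Sum>j<4. cnj (u (\<sigma> i)) * M (\<sigma> i) (\<sigma> j) * u (\<sigma> j))"
    using \<sigma> by (simp add: u_def bij_betw_inv_into_left)
  also have "\<dots> = (\<Sum>i<4. \<Sum>j<4. cnj (u i) * M i (\<sigma> j) * u (\<sigma> j))"
    by (rule sum.reindex_bij_betw[OF \<sigma>, where g = "\<lambda>i. \<Sum>j<4. cnj (u i) * M i (\<sigma> j) * u (\<sigma> j)"])
  also have "\<dots> = (\<Sum>i<4. \<Sum>j<4. cnj (u i) * M i j * u j)"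
    by (intro sum.cong refl sum.reindex_bij_betw[OF \<sigma>, where g = "\<lambda>j. cnj (u _) * M _ j * u j"])
  finally have eq: "(\<Sum>i<4. \<Sum>j<4. cnj (v i) * M (\<sigma> i) (\<sigma> j) * v j) =
      (\<Sum>i<4. \<Sum>j<4. cnj (u i) * M i j * u j)" .
  show "(\<Sum>i<4. \<Sum>j<4. cnj (v i) * M (\<sigma> i) (\<sigma> j) * v j) \<in> \<real> \<and>
      0 \<le> Re (\<Sum>i<4. \<Sum>j<4. cnj (v i) * M (\<sigma> i) (\<sigma> j) * v j)"
    unfolding eq using M unfolding psd4_def by blast
qed

lemma psd4_transpose:
  assumes M: "psd4 M"
  shows "psd4 (\<lambda>i j. M j i)"
  unfolding psd4_def
proof
  fix v :: "nat \<Rightarrow> complex"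
  have eq: "(\<Sum>i<4. \<Sum>j<4. cnj (v i) * M j i * v j) =
        (\<Sum>i<4. \<Sum>j<4. cnj (cnj (v i)) * M i j * cnj (v j))"
    by (subst sum.swap) (simp add: mult_ac)
  show "(\<Sum>i<4. \<Sum>j<4. cnj (v i) * M j i * v j) \<in> \<real> \<and>
      0 \<le> Re (\<Sum>i<4. \<Sum>j<4. cnj (v i) * M j i * v j)"
    unfolding eq using M unfolding psd4_def by (rule spec)
qed

lemma psd4_rank_one:
  assumes "\<And>i j. i < 4 \<Longrightarrow> j < 4 \<Longrightarrow> M i j = of_real r * w i * cnj (w j)" "r \<ge> 0"
  shows "psd4 M"
  unfolding psd4_def
proof
  fix v :: "nat \<Rightarrow> complex"
  define z where "z = (\<Sum>j<4. cnj (w j) * v j)"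
  have "(\<Sum>i<4. \<Sum>j<4. cnj (v i) * M i j * v j) =
        of_real r * ((\<Sum>i<4. cnj (v i) * w i) * z)"
    using assms(1) by (simp add: z_def sum_product sum_distrib_left mult_ac)
  also have "(\<Sum>i<4. cnj (v i) * w i) = cnj z"
    by (simp add: z_def mult.commute)
  also have "of_real r * (cnj z * z) = of_real (r * ((Re z)\<^sup>2 + (Im z)\<^sup>2))"
    using complex_mult_cnj[of z] by (simp add: mult.commute)
  finally show "(\<Sum>i<4. \<Sum>j<4. cnj (v i) * M i j * v j) \<in> \<real> \<and>
      0 \<le> Re (\<Sum>i<4. \<Sum>j<4. cnj (v i) * M i j * v j)"
    using assms(2) by simp
qed

lemma psd4_quadratic_form_nonneg: "psd4 M \<Longrightarrow> 0 \<le> Re (\<Sum>i<4. \<Sum>j<4. cnj (v i) * M i j * v j)"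
  unfolding psd4_def by blast

definition pauli_state :: "pt set \<Rightarrow> (pt \<Rightarrow> real) \<Rightarrow> nat \<Rightarrow> nat \<Rightarrow> complex" where
  "pauli_state S c i j = 1/4 * (pmat (0, 0) i j + (\<Sum>q\<in>S. complex_of_real (c q) * pmat q i j))"

lemma xstate_eq_pauli_state:
  assumes "S \<subseteq> perp p" "\<And>q. q \<notin> S \<Longrightarrow> c q = 0"
  shows "xstate p c = pauli_state S c"
proof -
  have "finite (perp p)"
    using finite_points by (simp add: perp_def)
  then have "(\<Sum>q\<in>perp p. complex_of_real (c q) * pmat q i j) = (\<Sum>q\<in>S. complex_of_real (c q) * pmat q i j)"
    for i j
    using assms by (intro sum.mono_neutral_right) auto
  then show ?thesis
    by (simp add: fun_eq_iff xstate_def pauli_state_def)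
qed

definition bell_lines :: "pt set set" where
  "bell_lines = {{(1, 1), (2, 2), (3, 3)}, {(1, 2), (2, 3), (3, 1)}, {(1, 3), (2, 1), (3, 2)}}"

text \<open>With these signs, \<open>pauli_state L (bell_coeff L)\<close> is the projector onto a maximally
  entangled state, for each of the three lines.\<close>

definition bell_coeff :: "pt set \<Rightarrow> pt \<Rightarrow> real" where
  "bell_coeff L q = (if q \<notin> L then 0 else if fst q = 3 then -1 else 1)"

lemma bell_lines_cover: "x \<in> Q0 \<Longrightarrow> \<exists>L\<in>bell_lines. x \<in> L"
  by (auto simp: Q0_def bell_lines_def)

lemma bell_line_subset_perp: "L \<in> bell_lines \<Longrightarrow> x \<in> L \<Longrightarrow> L \<subseteq> perp x"
  by (auto simp: bell_lines_def perp_eq pauli_anticommute_def)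

lemma rank_one_valid_entangled:
  assumes "\<And>i j. i < 4 \<Longrightarrow> j < 4 \<Longrightarrow> M i j = of_real r * w i * cnj (w j)" "r \<ge> 0"
    and "Re (\<Sum>i<4. \<Sum>j<4. cnj (v i) * ptrans M i j * v j) < 0"
  shows "valid M \<and> entangled M"
  using psd4_rank_one[OF assms(1,2)] psd4_quadratic_form_nonneg[of "ptrans M" v] assms(3)
  by (auto simp: valid_def entangled_def)

lemma bell_state_valid_entangled:
  assumes "L \<in> bell_lines"
  shows "valid (pauli_state L (bell_coeff L)) \<and> entangled (pauli_state L (bell_coeff L))"
proof -
  define M where "M = pauli_state L (bell_coeff L)"
  consider "L = {(1, 1), (2, 2), (3, 3)}" | "L = {(1, 2), (2, 3), (3, 1)}" | "L = {(1, 3), (2, 1), (3, 2)}"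
    using assms by (auto simp: bell_lines_def)
  then have "valid M \<and> entangled M"
  proof cases
    case 1
    let ?w = "(!) [0, 1, 1, 0]" and ?v = "(!) [1, 0, 0, -1]"
    have E: "M i j = of_real (1/2) * ?w i * cnj (?w j)" if "i < 4" "j < 4" for i j
      using that unfolding less_4_cases M_def 1
      by (elim disjE) (simp_all add: pauli_state_def bell_coeff_def pmat_def pauli1_def)
    moreover have "Re (\<Sum>i<4. \<Sum>j<4. cnj (?v i) * ptrans M i j * ?v j) < 0"
      by (simp add: sum_lessThan_4 ptrans_def E)
    ultimately show ?thesis
      by (intro rank_one_valid_entangled[where r = "1/2" and w = ?w and v = ?v]) simp_all
  next
    case 2
    let ?w = "(!) [1, -1, \<i>, \<i>]" and ?v = "(!) [0, 1, -\<i>, \<i>]"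
    have E: "M i j = of_real (1/4) * ?w i * cnj (?w j)" if "i < 4" "j < 4" for i j
      using that unfolding less_4_cases M_def 2
      by (elim disjE) (simp_all add: pauli_state_def bell_coeff_def pmat_def pauli1_def)
    moreover have "Re (\<Sum>i<4. \<Sum>j<4. cnj (?v i) * ptrans M i j * ?v j) < 0"
      by (simp add: sum_lessThan_4 ptrans_def E)
    ultimately show ?thesis
      by (intro rank_one_valid_entangled[where r = "1/4" and w = ?w and v = ?v]) simp_all
  next
    case 3
    let ?w = "(!) [1, -\<i>, 1, \<i>]" and ?v = "(!) [0, 1, -\<i>, 1]"
    have E: "M i j = of_real (1/4) * ?w i * cnj (?w j)" if "i < 4" "j < 4" for i j
      using that unfolding less_4_cases M_def 3
      by (elim disjE) (simp_all add: pauli_state_def bell_coeff_def pmat_def pauli1_def)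
    moreover have "Re (\<Sum>i<4. \<Sum>j<4. cnj (?v i) * ptrans M i j * ?v j) < 0"
      by (simp add: sum_lessThan_4 ptrans_def E)
    ultimately show ?thesis
      by (intro rank_one_valid_entangled[where r = "1/4" and w = ?w and v = ?v]) simp_all
  qed
  then show ?thesis
    by (simp add: M_def)
qed

lemma grid_point_entangled_state:
  assumes "x \<in> Q0"
  shows "\<exists>c. valid (xstate x c) \<and> entangled (xstate x c)"
proof -
  obtain L where "L \<in> bell_lines" "x \<in> L"
    using bell_lines_cover[OF assms] by blast
  then have "xstate x (bell_coeff L) = pauli_state L (bell_coeff L)"
    by (intro xstate_eq_pauli_state bell_line_subset_perp) (auto simp: bell_coeff_def)
  then show ?thesis
    using bell_state_valid_entangled[OF \<open>L \<in> bell_lines\<close>] by metis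
qed

lemma perp_I_tensor:
  "b \<in> {1, 2, 3} \<Longrightarrow> perp (0, b) = {(0, b), (1, 0), (2, 0), (3, 0), (1, b), (2, b), (3, b)}"
  by (elim insertE emptyE; simp add: perp_eq; auto simp: pauli_anticommute_def less_4_cases)

lemma perp_tensor_I:
  "a \<in> {1, 2, 3} \<Longrightarrow> perp (a, 0) = {(a, 0), (0, 1), (0, 2), (0, 3), (a, 1), (a, 2), (a, 3)}"
  by (elim insertE emptyE; simp add: perp_eq; auto simp: pauli_anticommute_def less_4_cases)

text \<open>Partial transposition negates exactly the terms with Y in the second factor. For
  p = I \<otimes> B this is undone by conjugation with I \<otimes> X (flipping bit 0 of the index) when B = Y;
  for p = A \<otimes> I it is the full transpose, up to conjugation with X \<otimes> I (flipping bit 1) when A = Y.\<close>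

lemma ptrans_xstate_I_tensor:
  assumes "b \<in> {1, 2, 3}"
  obtains k where "k < 4"
    "\<And>i j. i < 4 \<Longrightarrow> j < 4 \<Longrightarrow> ptrans (xstate (0, b) c) i j = xstate (0, b) c (xor i k) (xor j k)"
proof (rule that[of "if b = 2 then 1 else 0"])
  fix i j :: nat
  assume "i < 4" "j < 4"
  then show "ptrans (xstate (0, b) c) i j =
      xstate (0, b) c (xor i (if b = 2 then 1 else 0)) (xor j (if b = 2 then 1 else 0))"
    using assms unfolding less_4_cases insert_iff empty_iff
    by (elim disjE) (simp_all add: perp_I_tensor xstate_def ptrans_def pmat_def pauli1_def algebra_simps)
qed simp

lemma ptrans_xstate_tensor_I:
  assumes "a \<in> {1, 2, 3}"
  obtains k where "k < 4"
    "\<And>i j. i < 4 \<Longrightarrow> j < 4 \<Longrightarrow> ptrans (xstate (a, 0) c) i j = xstate (a, 0) c (xor j k) (xor i k)"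
proof (rule that[of "if a = 2 then 2 else 0"])
  fix i j :: nat
  assume "i < 4" "j < 4"
  then show "ptrans (xstate (a, 0) c) i j =
      xstate (a, 0) c (xor j (if a = 2 then 2 else 0)) (xor i (if a = 2 then 2 else 0))"
    using assms unfolding less_4_cases insert_iff empty_iff
    by (elim disjE) (simp_all add: perp_tensor_I xstate_def ptrans_def pmat_def pauli1_def algebra_simps)
qed simp

lemma off_grid_separable:
  assumes "p \<in> points" "p \<notin> Q0" "valid (xstate p c)"
  shows "separable (xstate p c)"
  using assms(1,2)
proof (cases rule: off_grid_cases)
  case (I_tensor b)
  then obtain k where "k < 4"
    and ptrans_eq: "\<And>i j. i < 4 \<Longrightarrow> j < 4 \<Longrightarrow> ptrans (xstate p c) i j = xstate p c (xor i k) (xor j k)"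
    using ptrans_xstate_I_tensor by blast
  have "psd4 (\<lambda>i j. xstate p c (xor i k) (xor j k))"
    using psd4_reindex[OF bij_betw_xor_less_4[OF \<open>k < 4\<close>]] assms(3) by (simp add: valid_def)
  then show ?thesis
    unfolding separable_def by (rule psd4_cong[rotated]) (rule ptrans_eq)
next
  case (tensor_I a)
  then obtain k where "k < 4"
    and ptrans_eq: "\<And>i j. i < 4 \<Longrightarrow> j < 4 \<Longrightarrow> ptrans (xstate p c) i j = xstate p c (xor j k) (xor i k)"
    using ptrans_xstate_tensor_I by blast
  have "psd4 (\<lambda>i j. xstate p c (xor j k) (xor i k))"
    using psd4_transpose[OF psd4_reindex[OF bij_betw_xor_less_4[OF \<open>k < 4\<close>]]] assms(3)
    by (simp add: valid_def)
  then show ?thesis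
    unfolding separable_def by (rule psd4_cong[rotated]) (rule ptrans_eq)
qed

theorem proposition3:
  shows "(\<forall>p\<in>points. (\<exists>c. valid (xstate p c) \<and> entangled (xstate p c)) \<longleftrightarrow> tangential p)
       \<and> (\<forall>p\<in>points. (\<forall>c. valid (xstate p c) \<longrightarrow> separable (xstate p c)) \<longleftrightarrow> transversal p)
       \<and> card {p\<in>points. tangential p} = 9
       \<and> card {p\<in>points. transversal p} = 6"
proof -
  have entangled_iff: "(\<exists>c. valid (xstate p c) \<and> entangled (xstate p c)) \<longleftrightarrow> p \<in> Q0"
    if "p \<in> points" for p
    using grid_point_entangled_state[of p] off_grid_separable[OF that]
    unfolding entangled_def separable_def by blast
  have "\<forall>p\<in>points. (\<exists>c. valid (xstate p c) \<and> entangled (xstate p c)) \<longleftrightarrow> tangential p"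
    using entangled_iff tangential_iff by blast
  moreover have "\<forall>p\<in>points. (\<forall>c. valid (xstate p c) \<longrightarrow> separable (xstate p c)) \<longleftrightarrow> transversal p"
    using entangled_iff transversal_iff unfolding entangled_def separable_def by blast
  moreover have "{p\<in>points. tangential p} = Q0"
    using tangential_iff Q0_subset_points by blast
  moreover have "{p\<in>points. transversal p} = points - Q0"
    using transversal_iff by blast
  moreover have "card Q0 = 9"
    by (simp add: Q0_eq card_cartesian_product)
  moreover have "card (points - Q0) = 6"
    using card_Diff_subset[OF finite_subset[OF Q0_subset_points finite_points] Q0_subset_points]
    by (simp add: card_points \<open>card Q0 = 9\<close>)
  ultimately show ?thesis
    by simp
qed

end
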